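(* Let $k$ be a field, $A=kQ_A/I_A$ a monomial algebra, and $B$ the algebra obtained from $A$ by gluing a source vertex $e_1$ and a sink vertex $e_n$ of $Q_A$ (distinct, non-isolated). Then $\mathrm{Ker}(\delta^1_A)\cong\mathrm{Ker}(\delta^1_B)$ as Lie algebras, except in the case that $\mathrm{char}(k)=2$ and the gluing produces a block of $B$ isomorphic to $k[x]/(x^2)$.
   Context: Monomial algebra: $A=kQ_A/I_A$, $Q_A$ finite quiver, $I_A$ admissible, generated by a minimal set $Z_A$ of paths of length $\ge2$; $\mathcal B_A$: paths (including trivial ones) avoiding elements of $Z_A$ as subpaths. Source: no incoming arrows; sink: no outgoing arrows. Gluing: $B\subseteq A$ generated by $e_1+e_n$, the other vertex idempotents and all arrows; $B\cong kQ_B/I_B$ with $Q_B$ obtained by identifying $e_1,e_n$ (arrow $\alpha\mapsto\alpha^*$) and $I_B$ generated by the relations of $Z_A$ together with all newly formed length-2 paths through the identified vertex; $Z_B$ the resulting minimal relation set and $\mathcal B_B$ the basis paths of $B$. For path sets $X,Y$, $k(X\|Y)$ has basis the pairs $x\|y$ of parallel paths. For monomial $\Lambda=kQ/\langle Z\rangle$ with basis paths $\mathcal B$, $\delta^1:k(Q_1\|\mathcal B)\to k(Z\|\mathcal B)$, $a\|\gamma\mapsto\sum_{r\in Z}r\|r^{a\|\gamma}$, where $r^{a\|\gamma}$ is the sum over occurrences of $a$ in $r$ of the path obtained by replacing that occurrence by $\gamma$, keeping only paths in $\mathcal B$. $\mathrm{Ker}\,\delta^1$ is a Lie algebra with bracket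 $[a\|\gamma,b\|\epsilon]=b\|\epsilon^{a\|\gamma}-a\|\gamma^{b\|\epsilon}$. $\delta^1_A,\delta^1_B$ denote these for $A,B$. *)

theory Defs
  imports Main "HOL-Library.Sublist"
begin

(* A path is a pair (v, as): start vertex v and arrow list as = [a1,...,am], traversed
   a1 first (so s a1 = v, t ai = s a(i+1)).  (v, []) is the trivial path e_v. *)

definition valid_path :: "'v set \<Rightarrow> 'a set \<Rightarrow> ('a \<Rightarrow> 'v) \<Rightarrow> ('a \<Rightarrow> 'v) \<Rightarrow> 'v \<times> 'a list \<Rightarrow> bool" where
  "valid_path V Ar s t p \<longleftrightarrow>
     fst p \<in> V \<and> set (snd p) \<subseteq> Ar \<and>
     (snd p \<noteq> [] \<longrightarrow> s (hd (snd p)) = fst p) \<and>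
     (\<forall>i. Suc i < length (snd p) \<longrightarrow> t (snd p ! i) = s (snd p ! Suc i))"

definition ptgt :: "('a \<Rightarrow> 'v) \<Rightarrow> 'v \<times> 'a list \<Rightarrow> 'v" where
  "ptgt t p = (if snd p = [] then fst p else t (last (snd p)))"

definition parallel :: "('a \<Rightarrow> 'v) \<Rightarrow> 'v \<times> 'a list \<Rightarrow> 'v \<times> 'a list \<Rightarrow> bool" where
  "parallel t p q \<longleftrightarrow> fst p = fst q \<and> ptgt t p = ptgt t q"

definition arrow_path :: "('a \<Rightarrow> 'v) \<Rightarrow> 'a \<Rightarrow> 'v \<times> 'a list" where
  "arrow_path s a = (s a, [a])"

definition basis_paths :: "'v set \<Rightarrow> 'a set \<Rightarrow> ('a \<Rightarrow> 'v) \<Rightarrow> ('a \<Rightarrow> 'v) \<Rightarrow> ('v \<times> 'a list) set \<Rightarrow> ('v \<times> 'a list) set" where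
  "basis_paths V Ar s t Z = {p. valid_path V Ar s t p \<and> (\<forall>r\<in>Z. \<not> sublist (snd r) (snd p))}"

(* kQ/<Z> is a monomial algebra: Q finite, Z a minimal set of paths of length >= 2,
   and the ideal is admissible (equivalently, finitely many basis paths). *)
definition monomial_pres :: "'v set \<Rightarrow> 'a set \<Rightarrow> ('a \<Rightarrow> 'v) \<Rightarrow> ('a \<Rightarrow> 'v) \<Rightarrow> ('v \<times> 'a list) set \<Rightarrow> bool" where
  "monomial_pres V Ar s t Z \<longleftrightarrow>
     finite V \<and> finite Ar \<and> (\<forall>a\<in>Ar. s a \<in> V \<and> t a \<in> V) \<and>
     (\<forall>r\<in>Z. valid_path V Ar s t r \<and> length (snd r) \<ge> 2) \<and>
     (\<forall>r\<in>Z. \<forall>r'\<in>Z. sublist (snd r') (snd r) \<longrightarrow> r' = r) \<and>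
     finite (basis_paths V Ar s t Z)"

(* basis of k(Q_1 || B): pairs (a, gamma), gamma a basis path parallel to the arrow a *)
definition arrow_pairs :: "'v set \<Rightarrow> 'a set \<Rightarrow> ('a \<Rightarrow> 'v) \<Rightarrow> ('a \<Rightarrow> 'v) \<Rightarrow> ('v \<times> 'a list) set \<Rightarrow> ('a \<times> ('v \<times> 'a list)) set" where
  "arrow_pairs V Ar s t Z = {(a, g). a \<in> Ar \<and> g \<in> basis_paths V Ar s t Z \<and> parallel t (arrow_path s a) g}"

(* elements of k(Q_1 || B), as coefficient functions supported on the basis pairs *)
definition QB_space :: "'v set \<Rightarrow> 'a set \<Rightarrow> ('a \<Rightarrow> 'v) \<Rightarrow> ('a \<Rightarrow> 'v) \<Rightarrow> ('v \<times> 'a list) set \<Rightarrow> ('a \<times> ('v \<times> 'a list) \<Rightarrow> 'k::field) set" where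
  "QB_space V Ar s t Z = {f. \<forall>x. x \<notin> arrow_pairs V Ar s t Z \<longrightarrow> f x = 0}"

definition replace_at :: "'v \<times> 'a list \<Rightarrow> nat \<Rightarrow> 'v \<times> 'a list \<Rightarrow> 'v \<times> 'a list" where
  "replace_at q i g = (fst q, take i (snd q) @ snd g @ drop (Suc i) (snd q))"

(* coefficient of the basis path p in q^{a||g}: number of occurrences of a in q whose
   replacement by g yields p, where only basis paths are kept *)
definition subst_coeff :: "'v set \<Rightarrow> 'a set \<Rightarrow> ('a \<Rightarrow> 'v) \<Rightarrow> ('a \<Rightarrow> 'v) \<Rightarrow> ('v \<times> 'a list) set \<Rightarrow>
    'a \<Rightarrow> 'v \<times> 'a list \<Rightarrow> 'v \<times> 'a list \<Rightarrow> 'v \<times> 'a list \<Rightarrow> 'k::field" where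
  "subst_coeff V Ar s t Z a g q p =
     (if p \<in> basis_paths V Ar s t Z
      then of_nat (card {i. i < length (snd q) \<and> snd q ! i = a \<and> replace_at q i g = p})
      else 0)"

(* delta^1 : k(Q_1||B) -> k(Z||B), result as coefficient function on pairs (r, p) *)
definition delta1 :: "'v set \<Rightarrow> 'a set \<Rightarrow> ('a \<Rightarrow> 'v) \<Rightarrow> ('a \<Rightarrow> 'v) \<Rightarrow> ('v \<times> 'a list) set \<Rightarrow>
    ('a \<times> ('v \<times> 'a list) \<Rightarrow> 'k::field) \<Rightarrow> ('v \<times> 'a list) \<times> ('v \<times> 'a list) \<Rightarrow> 'k" where
  "delta1 V Ar s t Z f = (\<lambda>(r, p).
     if r \<in> Z then (\<Sum>(a, g)\<in>arrow_pairs V Ar s t Z. f (a, g) * subst_coeff V Ar s t Z a g r p) else 0)"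

definition ker_delta1 :: "'v set \<Rightarrow> 'a set \<Rightarrow> ('a \<Rightarrow> 'v) \<Rightarrow> ('a \<Rightarrow> 'v) \<Rightarrow> ('v \<times> 'a list) set \<Rightarrow>
    ('a \<times> ('v \<times> 'a list) \<Rightarrow> 'k::field) set" where
  "ker_delta1 V Ar s t Z = {f \<in> QB_space V Ar s t Z. delta1 V Ar s t Z f = (\<lambda>_. 0)}"

(* bilinear extension of [a||g, b||e] = b||e^{a||g} - a||g^{b||e} *)
definition lie_br :: "'v set \<Rightarrow> 'a set \<Rightarrow> ('a \<Rightarrow> 'v) \<Rightarrow> ('a \<Rightarrow> 'v) \<Rightarrow> ('v \<times> 'a list) set \<Rightarrow>
    ('a \<times> ('v \<times> 'a list) \<Rightarrow> 'k::field) \<Rightarrow> ('a \<times> ('v \<times> 'a list) \<Rightarrow> 'k) \<Rightarrow> ('a \<times> ('v \<times> 'a list) \<Rightarrow> 'k)" where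
  "lie_br V Ar s t Z f h = (\<lambda>(c, p).
     \<Sum>(a, g)\<in>arrow_pairs V Ar s t Z. \<Sum>(b, e)\<in>arrow_pairs V Ar s t Z.
        f (a, g) * h (b, e) *
        ((if b = c then subst_coeff V Ar s t Z a g e p else 0)
         - (if a = c then subst_coeff V Ar s t Z b e g p else 0)))"

definition lie_isomorphic :: "('x \<Rightarrow> 'k::field) set \<Rightarrow> (('x \<Rightarrow> 'k) \<Rightarrow> ('x \<Rightarrow> 'k) \<Rightarrow> ('x \<Rightarrow> 'k)) \<Rightarrow>
    ('y \<Rightarrow> 'k) set \<Rightarrow> (('y \<Rightarrow> 'k) \<Rightarrow> ('y \<Rightarrow> 'k) \<Rightarrow> ('y \<Rightarrow> 'k)) \<Rightarrow> bool" where
  "lie_isomorphic K1 br1 K2 br2 \<longleftrightarrow> (\<exists>\<phi>. bij_betw \<phi> K1 K2 \<and>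
     (\<forall>x\<in>K1. \<forall>y\<in>K1. \<phi> (\<lambda>i. x i + y i) = (\<lambda>j. \<phi> x j + \<phi> y j)) \<and>
     (\<forall>c. \<forall>x\<in>K1. \<phi> (\<lambda>i. c * x i) = (\<lambda>j. c * \<phi> x j)) \<and>
     (\<forall>x\<in>K1. \<forall>y\<in>K1. \<phi> (br1 x y) = br2 (\<phi> x) (\<phi> y)))"

definition glue :: "'v \<Rightarrow> 'v \<Rightarrow> 'v \<Rightarrow> 'v" where
  "glue e1 en v = (if v = en then e1 else v)"

definition glued_V :: "'v set \<Rightarrow> 'v \<Rightarrow> 'v \<Rightarrow> 'v set" where
  "glued_V V e1 en = V - {en}"

(* generators of I_B: relations of Z_A (read in Q_B) together with all newly formed
   length-2 paths through the identified vertex *)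
definition glued_gens :: "'a set \<Rightarrow> ('a \<Rightarrow> 'v) \<Rightarrow> ('a \<Rightarrow> 'v) \<Rightarrow> ('v \<times> 'a list) set \<Rightarrow> 'v \<Rightarrow> 'v \<Rightarrow> ('v \<times> 'a list) set" where
  "glued_gens Ar s t Z e1 en =
     (\<lambda>r. (glue e1 en (fst r), snd r)) ` Z \<union>
     {(glue e1 en (s b), [b, a]) | b a. b \<in> Ar \<and> a \<in> Ar \<and>
        glue e1 en (t b) = e1 \<and> glue e1 en (s a) = e1 \<and> t b \<noteq> s a}"

definition glued_Z :: "'a set \<Rightarrow> ('a \<Rightarrow> 'v) \<Rightarrow> ('a \<Rightarrow> 'v) \<Rightarrow> ('v \<times> 'a list) set \<Rightarrow> 'v \<Rightarrow> 'v \<Rightarrow> ('v \<times> 'a list) set" where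
  "glued_Z Ar s t Z e1 en =
     {r \<in> glued_gens Ar s t Z e1 en. \<forall>r'\<in>glued_gens Ar s t Z e1 en. sublist (snd r') (snd r) \<longrightarrow> snd r' = snd r}"

(* the block of kQ/<Z> containing vertex v is isomorphic to k[x]/(x^2): the connected
   component of v consists of v alone with exactly one arrow x (a loop), and x^2 is a relation *)
definition dual_numbers_block :: "'a set \<Rightarrow> ('a \<Rightarrow> 'v) \<Rightarrow> ('a \<Rightarrow> 'v) \<Rightarrow> ('v \<times> 'a list) set \<Rightarrow> 'v \<Rightarrow> bool" where
  "dual_numbers_block Ar s t Z v \<longleftrightarrow>
     (\<exists>x. {a \<in> Ar. s a = v \<or> t a = v} = {x} \<and> s x = v \<and> t x = v \<and> (v, [x, x]) \<in> Z)"

end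

theory Submission
  imports Defs
begin

(* Gluing the source e1 to the sink en keeps every relation of A and adds the relations ba with
   t b = en and s a = e1; the basis paths of B are those of A that do not start at en.  Hence
   k(Q_1||B_B) is k(Q_1||B_A) plus the pairs c||e1 for the arrows c : e1 -> en.  On the common part
   delta^1 and the bracket agree, because substituting a path parallel to b or a into a new
   relation ba always creates another new relation.  Conversely, a kernel element of delta^1_B has
   no component on c||e1: evaluating delta^1_B at a new relation cc' (or c'c) with c' <> c isolates
   this coefficient, and if c is the only arrow at the glued vertex, the relation c^2 isolates it
   with multiplicity 2.  So the two kernels are the same space with the same bracket. *)

lemma sublist_pair_iff:
  "sublist [x, y] xs \<longleftrightarrow> (\<exists>i. Suc i < length xs \<and> xs ! i = x \<and> xs ! Suc i = y)"
proof
  assume "sublist [x, y] xs"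
  then obtain ps ss where "xs = ps @ [x, y] @ ss" unfolding sublist_def by blast
  then show "\<exists>i. Suc i < length xs \<and> xs ! i = x \<and> xs ! Suc i = y"
    by (intro exI[of _ "length ps"]) (simp add: nth_append)
next
  assume "\<exists>i. Suc i < length xs \<and> xs ! i = x \<and> xs ! Suc i = y"
  then obtain i where "Suc i < length xs" "xs ! i = x" "xs ! Suc i = y" by blast
  then have "xs = take i xs @ [x, y] @ drop (Suc (Suc i)) xs"
    by (metis Cons_nth_drop_Suc Suc_lessD append_Cons append_Nil append_take_drop_id)
  then show "sublist [x, y] xs" by (metis sublist_appendI)
qed

lemma sublist_length_ge_imp_eq: "sublist xs ys \<Longrightarrow> length ys \<le> length xs \<Longrightarrow> xs = ys"
  by (auto simp: sublist_def)

lemma sublist_last_snoc: "xs \<noteq> [] \<Longrightarrow> sublist [last xs, a] (xs @ [a])"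
  by (metis append_butlast_last_id append.assoc append_Cons append_Nil sublist_append_leftI)

lemma sublist_Cons_hd: "xs \<noteq> [] \<Longrightarrow> sublist [b, hd xs] (b # xs)"
  by (metis list.collapse prefix_imp_sublist prefix_Cons Nil_prefix)

lemma card_less_two: "card {i::nat. i < 2 \<and> P i} = of_bool (P 0) + of_bool (P 1)"
proof -
  have "{i::nat. i < 2 \<and> P i} = {i. i = 0 \<and> P 0} \<union> {i. i = 1 \<and> P 1}"
    by (auto simp: less_2_cases_iff)
  then show ?thesis by auto
qed

lemma two_neq_zero_if_CHAR_neq_2:
  assumes "CHAR('a::{semiring_1, zero_neq_one}) \<noteq> 2"
  shows "(2::'a) \<noteq> 0"
proof
  assume "(2::'a) = 0"
  then have "CHAR('a) dvd 2" by (metis of_nat_eq_0_iff_char_dvd of_nat_numeral)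
  then have "CHAR('a) \<le> 2" "CHAR('a) \<noteq> 0" by (auto dest: dvd_imp_le intro: gr0I)
  then show False using assms CHAR_not_1 by (auto simp: le_Suc_eq numeral_2_eq_2)
qed

lemma lie_isomorphic_eqI:
  assumes "K1 = K2" and "\<forall>x\<in>K1. \<forall>y\<in>K1. br1 x y = br2 x y"
  shows "lie_isomorphic K1 br1 K2 br2"
  unfolding lie_isomorphic_def using assms by (intro exI[of _ id]) auto

lemma valid_path_adjacent: "valid_path V Ar s t p \<Longrightarrow> sublist [x, y] (snd p) \<Longrightarrow> t x = s y"
  unfolding valid_path_def sublist_pair_iff by blast

lemma replace_at_pair_singleton:
  assumes "i < 2" and "replace_at (v, [x, y]) i g = (w, [z])"
  shows "snd g = [] \<and> (i = 0 \<and> z = y \<or> i = 1 \<and> z = x)"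
  using assms by (auto simp: replace_at_def less_2_cases_iff)

lemma subst_coeff_eq_0I:
  assumes "\<And>i. i < length (snd q) \<Longrightarrow> snd q ! i = a \<Longrightarrow> replace_at q i g = p \<Longrightarrow>
      p \<notin> basis_paths V Ar s t Z"
  shows "subst_coeff V Ar s t Z a g q p = 0"
proof (cases "p \<in> basis_paths V Ar s t Z")
  case True
  with assms have "{i. i < length (snd q) \<and> snd q ! i = a \<and> replace_at q i g = p} = {}" by blast
  then show ?thesis unfolding subst_coeff_def by (metis card.empty of_nat_0)
qed (simp add: subst_coeff_def)

lemma subst_coeff_trivial_in_pair:
  "subst_coeff V Ar s t Z c (u, []) (v, [x, y]) (v, [z]) =
     (if (v, [z]) \<in> basis_paths V Ar s t Z
      then of_bool (x = c \<and> y = z) + of_bool (y = c \<and> x = z) else 0)"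
proof -
  have "{i. i < length (snd (v, [x, y])) \<and> snd (v, [x, y]) ! i = c \<and>
            replace_at (v, [x, y]) i (u, []) = (v, [z])}
      = {i. i < 2 \<and> [x, y] ! i = c \<and> [y, x] ! i = z}"
    by (auto simp: replace_at_def less_Suc_eq numeral_2_eq_2)
  then show ?thesis by (simp add: subst_coeff_def card_less_two)
qed

lemma delta1_single_pair:
  assumes "finite (arrow_pairs V Ar s t Z)" and "r \<in> Z" and "(c0, g0) \<in> arrow_pairs V Ar s t Z"
    and "\<And>c g i. (c, g) \<in> arrow_pairs V Ar s t Z \<Longrightarrow> i < length (snd r) \<Longrightarrow> snd r ! i = c \<Longrightarrow>
      replace_at r i g = p \<Longrightarrow> c = c0 \<and> g = g0"
  shows "delta1 V Ar s t Z f (r, p) = f (c0, g0) * subst_coeff V Ar s t Z c0 g0 r p"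
proof -
  have "subst_coeff V Ar s t Z (fst x) (snd x) r p = 0"
    if "x \<in> arrow_pairs V Ar s t Z - {(c0, g0)}" for x
    using that assms(4)[of "fst x" "snd x"] by (intro subst_coeff_eq_0I) auto
  then have "(\<Sum>(c, g)\<in>arrow_pairs V Ar s t Z. f (c, g) * subst_coeff V Ar s t Z c g r p)
      = (\<Sum>(c, g)\<in>{(c0, g0)}. f (c, g) * subst_coeff V Ar s t Z c g r p)"
    using assms(1,3) by (intro sum.mono_neutral_right) (auto simp: split_beta)
  then show ?thesis using assms(2) by (simp add: delta1_def)
qed

locale source_sink_gluing =
  fixes V :: "'v set" and Ar :: "'a set" and s t :: "'a \<Rightarrow> 'v"
    and Z :: "('v \<times> 'a list) set" and e1 en :: 'v
  assumes mono: "monomial_pres V Ar s t Z"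
    and e1V: "e1 \<in> V" and dist: "e1 \<noteq> en"
    and source: "\<forall>a\<in>Ar. t a \<noteq> e1"
    and sink: "\<forall>a\<in>Ar. s a \<noteq> en"
begin

abbreviation "VB \<equiv> glued_V V e1 en"
abbreviation "sB \<equiv> glue e1 en \<circ> s"
abbreviation "tB \<equiv> glue e1 en \<circ> t"
abbreviation "ZB \<equiv> glued_Z Ar s t Z e1 en"
abbreviation "basisA \<equiv> basis_paths V Ar s t Z"
abbreviation "basisB \<equiv> basis_paths VB Ar sB tB ZB"
abbreviation "pairsA \<equiv> arrow_pairs V Ar s t Z"
abbreviation "pairsB \<equiv> arrow_pairs VB Ar sB tB ZB"

declare glue_def [simp]

lemma relation_valid: "r \<in> Z \<Longrightarrow> valid_path V Ar s t r \<and> 2 \<le> length (snd r)"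
  using mono unfolding monomial_pres_def by blast

lemma relation_start_neq_en: "r \<in> Z \<Longrightarrow> fst r \<noteq> en"
proof -
  assume "r \<in> Z"
  then have "valid_path V Ar s t r" "snd r \<noteq> []" using relation_valid[of r] by auto
  then show ?thesis using sink unfolding valid_path_def by (metis hd_in_set subsetD)
qed

lemma relation_minimal: "r \<in> Z \<Longrightarrow> r' \<in> Z \<Longrightarrow> sublist (snd r') (snd r) \<Longrightarrow> r' = r"
  using mono unfolding monomial_pres_def by blast

lemma relation_in_glued_Z: "r \<in> Z \<Longrightarrow> r \<in> ZB"
proof -
  assume r: "r \<in> Z"
  have gen: "r \<in> glued_gens Ar s t Z e1 en"
    unfolding glued_gens_def using r relation_start_neq_en[OF r]
    by (intro UnI1 image_eqI[of _ _ r]) auto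
  have "snd r' = snd r" if r': "r' \<in> glued_gens Ar s t Z e1 en" "sublist (snd r') (snd r)" for r'
  proof -
    from r'(1) consider (old) r0 where "r0 \<in> Z" "snd r' = snd r0"
      | (new) b a where "t b \<noteq> s a" "snd r' = [b, a]"
      unfolding glued_gens_def by auto
    then show ?thesis
    proof cases
      case old
      then show ?thesis using relation_minimal[OF r old(1)] r'(2) by auto
    next
      case new
      then show ?thesis using valid_path_adjacent[of V Ar s t r b a] relation_valid[OF r] r'(2)
        by simp
    qed
  qed
  with gen show ?thesis unfolding glued_Z_def by blast
qed

lemma new_relation_in_glued_Z:
  assumes "b \<in> Ar" "a \<in> Ar" "t b = en" "s a = e1"
  shows "(s b, [b, a]) \<in> ZB"
proof -
  have gen: "(s b, [b, a]) \<in> glued_gens Ar s t Z e1 en"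
    unfolding glued_gens_def using assms sink dist by (intro UnI2) auto
  have len: "2 \<le> length (snd r')" if "r' \<in> glued_gens Ar s t Z e1 en" for r'
    using that relation_valid unfolding glued_gens_def by auto
  have "snd r' = [b, a]" if "r' \<in> glued_gens Ar s t Z e1 en" "sublist (snd r') [b, a]" for r'
    using len[OF that(1)] that(2) sublist_length_ge_imp_eq[of "snd r'" "[b, a]"] by simp
  with gen show ?thesis unfolding glued_Z_def by auto
qed

lemma glued_Z_cases:
  "r \<in> ZB \<Longrightarrow> r \<in> Z \<or> (\<exists>b a. b \<in> Ar \<and> a \<in> Ar \<and> t b = en \<and> s a = e1 \<and> r = (s b, [b, a]))"
  unfolding glued_Z_def glued_gens_def using relation_start_neq_en source sink
  by (auto split: if_splits)

lemma glued_basis_subset: "basisB \<subseteq> basisA"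
proof
  fix p assume p: "p \<in> basisB"
  then have v: "valid_path VB Ar sB tB p" and avoid: "\<forall>r\<in>ZB. \<not> sublist (snd r) (snd p)"
    unfolding basis_paths_def by auto
  have arrows: "set (snd p) \<subseteq> Ar" using v unfolding valid_path_def by auto
  have "t (snd p ! i) = s (snd p ! Suc i)" if i: "Suc i < length (snd p)" for i
  proof (rule ccontr)
    let ?x = "snd p ! i" and ?y = "snd p ! Suc i"
    assume ne: "t ?x \<noteq> s ?y"
    have x: "?x \<in> Ar" "?y \<in> Ar" using arrows i by auto
    have "glue e1 en (t ?x) = glue e1 en (s ?y)" using v i unfolding valid_path_def by auto
    then have "t ?x = en" "s ?y = e1" using ne x source sink by (auto split: if_splits)
    then have "(s ?x, [?x, ?y]) \<in> ZB" using new_relation_in_glued_Z x by blast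
    moreover have "sublist [?x, ?y] (snd p)" using i by (auto simp: sublist_pair_iff)
    ultimately show False using avoid by fastforce
  qed
  moreover have "s (hd (snd p)) = fst p" if "snd p \<noteq> []"
  proof -
    have "s (hd (snd p)) \<noteq> en" using arrows hd_in_set[OF that] sink by blast
    then show ?thesis using v that unfolding valid_path_def by auto
  qed
  ultimately have "valid_path V Ar s t p"
    using v arrows unfolding valid_path_def glued_V_def by auto
  then show "p \<in> basisA"
    using avoid relation_in_glued_Z unfolding basis_paths_def by blast
qed

lemma basis_in_glued: "p \<in> basisA \<Longrightarrow> fst p \<noteq> en \<Longrightarrow> p \<in> basisB"
proof -
  assume p: "p \<in> basisA" "fst p \<noteq> en"
  then have v: "valid_path V Ar s t p" and avoid: "\<forall>r\<in>Z. \<not> sublist (snd r) (snd p)"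
    unfolding basis_paths_def by auto
  have "valid_path VB Ar sB tB p"
    using v p(2) unfolding valid_path_def glued_V_def by auto
  moreover have "\<not> sublist [b, a] (snd p)" if "t b = en" "s a = e1" for b a
    using valid_path_adjacent[OF v] that dist by metis
  then have "\<forall>r\<in>ZB. \<not> sublist (snd r) (snd p)"
    using glued_Z_cases avoid by fastforce
  ultimately show ?thesis unfolding basis_paths_def by blast
qed

lemma glued_basis_iff: "fst p \<noteq> en \<Longrightarrow> p \<in> basisB \<longleftrightarrow> p \<in> basisA"
  using basis_in_glued glued_basis_subset by blast

lemma short_path_in_basis:
  "valid_path V Ar s t p \<Longrightarrow> length (snd p) < 2 \<Longrightarrow> fst p \<noteq> en \<Longrightarrow> p \<in> basisB"
  using relation_valid sublist_length_le basis_in_glued unfolding basis_paths_def by fastforce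

lemma arrow_in_glued_basis: "a \<in> Ar \<Longrightarrow> (s a, [a]) \<in> basisB"
  using mono sink by (intro short_path_in_basis) (auto simp: valid_path_def monomial_pres_def)

lemma arrow_pairsD:
  "(a, g) \<in> pairsA \<Longrightarrow> a \<in> Ar \<and> g \<in> basisA \<and> fst g = s a \<and> ptgt t g = t a \<and> fst g \<noteq> en"
  using sink unfolding arrow_pairs_def parallel_def arrow_path_def ptgt_def by auto

lemma glued_arrow_pairsD:
  "(a, g) \<in> pairsB \<Longrightarrow> a \<in> Ar \<and> g \<in> basisB \<and> fst g = s a \<and> ptgt tB g = glue e1 en (t a)"
  using sink unfolding arrow_pairs_def parallel_def arrow_path_def ptgt_def by auto

lemma arrow_pairs_subset_glued: "pairsA \<subseteq> pairsB"
proof clarify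
  fix a g assume "(a, g) \<in> pairsA"
  with arrow_pairsD[OF this] show "(a, g) \<in> pairsB"
    using basis_in_glued unfolding arrow_pairs_def parallel_def arrow_path_def ptgt_def by auto
qed

lemma new_arrow_pair_in_glued: "c \<in> Ar \<Longrightarrow> s c = e1 \<Longrightarrow> t c = en \<Longrightarrow> (c, (e1, [])) \<in> pairsB"
  using short_path_in_basis[of "(e1, [])"] e1V dist
  unfolding arrow_pairs_def parallel_def arrow_path_def ptgt_def valid_path_def by auto

lemma glued_arrow_pairs_new:
  assumes "(c, g) \<in> pairsB" and "(c, g) \<notin> pairsA"
  shows "c \<in> Ar \<and> s c = e1 \<and> t c = en \<and> g = (e1, [])"
proof -
  have c: "c \<in> Ar" "g \<in> basisA" "fst g = s c" "ptgt tB g = glue e1 en (t c)"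
    using glued_arrow_pairsD[OF assms(1)] glued_basis_subset by auto
  then have "fst g \<noteq> en" using sink by auto
  then have "glue e1 en (ptgt t g) = glue e1 en (t c)" using c(4) by (auto simp: ptgt_def)
  moreover have "ptgt t g \<noteq> t c"
    using assms(2) c unfolding arrow_pairs_def parallel_def arrow_path_def ptgt_def by auto
  ultimately have ends: "t c = en" "ptgt t g = e1" using source c(1) by (auto split: if_splits)
  have "snd g = []"
  proof (rule ccontr)
    assume "snd g \<noteq> []"
    moreover have "valid_path V Ar s t g" using c(2) unfolding basis_paths_def by blast
    ultimately have "last (snd g) \<in> Ar" "t (last (snd g)) = e1"
      using ends(2) unfolding valid_path_def ptgt_def by auto
    then show False using source by blast
  qed
  then show ?thesis using c(1,3) ends by (auto simp: ptgt_def prod_eq_iff)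
qed

lemma finite_glued_arrow_pairs: "finite pairsB"
proof (rule finite_subset)
  show "pairsB \<subseteq> Ar \<times> basisA" using glued_basis_subset unfolding arrow_pairs_def by auto
  show "finite (Ar \<times> basisA)" using mono unfolding monomial_pres_def by blast
qed

lemma glued_subst_coeff_eq:
  "fst q \<noteq> en \<Longrightarrow> subst_coeff VB Ar sB tB ZB a g q p = subst_coeff V Ar s t Z a g q p"
  using glued_basis_iff[of p]
  by (cases "\<exists>i. replace_at q i g = p") (auto simp: subst_coeff_def replace_at_def)

lemma subst_coeff_new_relation:
  assumes ba: "b \<in> Ar" "a \<in> Ar" "t b = en" "s a = e1" and cg: "(c, g) \<in> pairsA"
  shows "subst_coeff VB Ar sB tB ZB c g (s b, [b, a]) p = 0"
proof (rule subst_coeff_eq_0I)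
  fix i assume i: "i < length (snd (s b, [b, a]))" "snd (s b, [b, a]) ! i = c"
    "replace_at (s b, [b, a]) i g = p"
  have g: "fst g = s c" "ptgt t g = t c" "valid_path V Ar s t g"
    using arrow_pairsD[OF cg] unfolding basis_paths_def by auto
  from i consider "c = b" "p = (s b, snd g @ [a])" | "c = a" "p = (s b, b # snd g)"
    by (auto simp: replace_at_def less_Suc_eq numeral_2_eq_2)
  then show "p \<notin> basisB"
  proof cases
    case 1
    have "snd g \<noteq> []" using g 1 ba sink by (auto simp: ptgt_def)
    then have "last (snd g) \<in> Ar" "t (last (snd g)) = en"
      using g 1 ba unfolding valid_path_def ptgt_def by auto
    then have "(s (last (snd g)), [last (snd g), a]) \<in> ZB" using new_relation_in_glued_Z ba by blast
    then show ?thesis using sublist_last_snoc[OF \<open>snd g \<noteq> []\<close>] 1 unfolding basis_paths_def by force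
  next
    case 2
    have "snd g \<noteq> []" using g 2 ba source by (auto simp: ptgt_def)
    then have "hd (snd g) \<in> Ar" "s (hd (snd g)) = e1"
      using g 2 ba unfolding valid_path_def by auto
    then have "(s b, [b, hd (snd g)]) \<in> ZB" using new_relation_in_glued_Z ba by blast
    then show ?thesis using sublist_Cons_hd[OF \<open>snd g \<noteq> []\<close>] 2 unfolding basis_paths_def by force
  qed
qed

lemma sum_glued_arrow_pairs_eq:
  "(\<And>x. x \<in> pairsB \<Longrightarrow> x \<notin> pairsA \<Longrightarrow> F x = 0) \<Longrightarrow> sum F pairsB = sum F pairsA"
  using finite_glued_arrow_pairs arrow_pairs_subset_glued by (intro sum.mono_neutral_right) auto

lemma QB_space_zero: "f \<in> QB_space V Ar s t Z \<Longrightarrow> x \<notin> pairsA \<Longrightarrow> f x = 0"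
  unfolding QB_space_def by blast

lemma glued_delta1_eq:
  assumes f: "f \<in> QB_space V Ar s t Z"
  shows "delta1 VB Ar sB tB ZB f = delta1 V Ar s t Z f"
proof (intro ext, clarify)
  fix r p :: "'v \<times> 'a list"
  show "delta1 VB Ar sB tB ZB f (r, p) = delta1 V Ar s t Z f (r, p)"
  proof (cases "r \<in> Z")
    case True
    have "(\<Sum>(a, g)\<in>pairsB. f (a, g) * subst_coeff VB Ar sB tB ZB a g r p)
        = (\<Sum>(a, g)\<in>pairsA. f (a, g) * subst_coeff VB Ar sB tB ZB a g r p)"
      by (rule sum_glued_arrow_pairs_eq) (auto simp: QB_space_zero[OF f])
    also have "\<dots> = (\<Sum>(a, g)\<in>pairsA. f (a, g) * subst_coeff V Ar s t Z a g r p)"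
      by (simp add: glued_subst_coeff_eq[OF relation_start_neq_en[OF True]])
    finally show ?thesis using True relation_in_glued_Z by (simp add: delta1_def)
  next
    case False
    have "(\<Sum>(c, g)\<in>pairsB. f (c, g) * subst_coeff VB Ar sB tB ZB c g r p) = 0" if rB: "r \<in> ZB"
    proof -
      obtain b a where ba: "b \<in> Ar" "a \<in> Ar" "t b = en" "s a = e1" "r = (s b, [b, a])"
        using glued_Z_cases[OF rB] False by blast
      have "(\<Sum>(c, g)\<in>pairsB. f (c, g) * subst_coeff VB Ar sB tB ZB c g r p)
          = (\<Sum>(c, g)\<in>pairsA. f (c, g) * subst_coeff VB Ar sB tB ZB c g r p)"
        by (rule sum_glued_arrow_pairs_eq) (auto simp: QB_space_zero[OF f])
      also have "\<dots> = 0"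
      proof (intro sum.neutral ballI, clarify)
        fix c g assume "(c, g) \<in> pairsA"
        then show "f (c, g) * subst_coeff VB Ar sB tB ZB c g r p = 0"
          using subst_coeff_new_relation[OF ba(1-4)] ba(5) by (metis mult_zero_right)
      qed
      finally show ?thesis .
    qed
    then show ?thesis using False by (simp add: delta1_def)
  qed
qed

lemma glued_lie_br_eq:
  assumes f: "f \<in> QB_space V Ar s t Z" and h: "h \<in> QB_space V Ar s t Z"
  shows "lie_br VB Ar sB tB ZB f h = lie_br V Ar s t Z f h"
proof (intro ext, clarify)
  fix c :: 'a and p :: "'v \<times> 'a list"
  let ?term = "\<lambda>sc (a, g) (b, e). f (a, g) * h (b, e) *
    ((if b = c then sc a g e p else 0) - (if a = c then sc b e g p else 0))"
  have "(\<Sum>x\<in>pairsB. \<Sum>y\<in>pairsB. ?term (subst_coeff VB Ar sB tB ZB) x y)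
      = (\<Sum>x\<in>pairsA. \<Sum>y\<in>pairsB. ?term (subst_coeff VB Ar sB tB ZB) x y)"
    by (rule sum_glued_arrow_pairs_eq) (auto simp: QB_space_zero[OF f])
  also have "\<dots> = (\<Sum>x\<in>pairsA. \<Sum>y\<in>pairsA. ?term (subst_coeff VB Ar sB tB ZB) x y)"
    by (intro sum.cong refl sum_glued_arrow_pairs_eq) (auto simp: QB_space_zero[OF h])
  also have "\<dots> = (\<Sum>x\<in>pairsA. \<Sum>y\<in>pairsA. ?term (subst_coeff V Ar s t Z) x y)"
    by (intro sum.cong refl) (auto simp: glued_subst_coeff_eq dest!: arrow_pairsD)
  finally show "lie_br VB Ar sB tB ZB f h (c, p) = lie_br V Ar s t Z f h (c, p)"
    unfolding lie_br_def prod.case by (simp only: split_def)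
qed

lemma ker_glued_multiple_new_pair_eq_0:
  fixes f :: "'a \<times> ('v \<times> 'a list) \<Rightarrow> 'k::field"
  assumes f: "f \<in> ker_delta1 VB Ar sB tB ZB" and r: "(v, [x, y]) \<in> ZB"
    and c: "c \<in> Ar" "s c = e1" "t c = en" and z: "z \<in> Ar" "s z = v"
    and only_c: "z = y \<Longrightarrow> x = c" "z = x \<Longrightarrow> y = c"
  shows "(of_bool (x = c \<and> y = z) + of_bool (y = c \<and> x = z)) * f (c, (e1, [])) = 0"
proof -
  have "delta1 VB Ar sB tB ZB f ((v, [x, y]), (v, [z]))
      = f (c, (e1, [])) * subst_coeff VB Ar sB tB ZB c (e1, []) (v, [x, y]) (v, [z])"
  proof (rule delta1_single_pair[OF finite_glued_arrow_pairs r new_arrow_pair_in_glued[OF c]])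
    fix c' g i assume c'g: "(c', g) \<in> pairsB" and i: "i < length (snd (v, [x, y]))"
      "snd (v, [x, y]) ! i = c'" "replace_at (v, [x, y]) i g = (v, [z])"
    have "i < 2" using i(1) by simp
    then have "snd g = []" "i = 0 \<and> z = y \<or> i = 1 \<and> z = x"
      using replace_at_pair_singleton[OF _ i(3)] by auto
    then have "c' = c" using i only_c by auto
    then have "fst g = e1" using glued_arrow_pairsD[OF c'g] c by simp
    then show "c' = c \<and> g = (e1, [])" using \<open>c' = c\<close> \<open>snd g = []\<close> by (simp add: prod_eq_iff)
  qed
  moreover have "(v, [z]) \<in> basisB" using arrow_in_glued_basis z by auto
  moreover have "delta1 VB Ar sB tB ZB f ((v, [x, y]), (v, [z])) = 0"
    using f unfolding ker_delta1_def by simp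
  ultimately show ?thesis by (simp add: subst_coeff_trivial_in_pair mult.commute)
qed

lemma ker_glued_new_pair_eq_0:
  fixes f :: "'a \<times> ('v \<times> 'a list) \<Rightarrow> 'k::field"
  assumes f: "f \<in> ker_delta1 VB Ar sB tB ZB" and c: "c \<in> Ar" "s c = e1" "t c = en"
    and not_exc: "\<not> (CHAR('k) = 2 \<and> dual_numbers_block Ar sB tB ZB e1)"
  shows "f (c, (e1, [])) = 0"
proof -
  consider (out) c' where "c' \<in> Ar" "c' \<noteq> c" "s c' = e1"
    | (into) c' where "c' \<in> Ar" "c' \<noteq> c" "t c' = en"
    | (alone) "{a \<in> Ar. s a = e1 \<or> t a = en} = {c}"
    using c by blast
  then show ?thesis
  proof cases
    case out
    have "(e1, [c, c']) \<in> ZB" using new_relation_in_glued_Z[OF c(1) out(1) c(3) out(3)] c(2) by simp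
    from ker_glued_multiple_new_pair_eq_0[OF f this c out(1)] show ?thesis using out by simp
  next
    case into
    have "(s c', [c', c]) \<in> ZB" using new_relation_in_glued_Z[OF into(1) c(1) into(3) c(2)] .
    from ker_glued_multiple_new_pair_eq_0[OF f this c into(1)] show ?thesis using into by simp
  next
    case alone
    have rel: "(e1, [c, c]) \<in> ZB" using new_relation_in_glued_Z[OF c(1) c(1) c(3) c(2)] c(2) by simp
    have "{a \<in> Ar. sB a = e1 \<or> tB a = e1} = {c}" using alone source sink by auto
    then have "dual_numbers_block Ar sB tB ZB e1"
      unfolding dual_numbers_block_def using c rel by auto
    then have "(2::'k) \<noteq> 0" using not_exc two_neq_zero_if_CHAR_neq_2 by blast
    moreover have "2 * f (c, (e1, [])) = 0"
      using ker_glued_multiple_new_pair_eq_0[OF f rel c c(1,2)] by simp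
    ultimately show ?thesis by simp
  qed
qed

lemma ker_delta1_glued_eq:
  assumes not_exc: "\<not> (CHAR('k::field) = 2 \<and> dual_numbers_block Ar sB tB ZB e1)"
  shows "(ker_delta1 VB Ar sB tB ZB :: ('a \<times> ('v \<times> 'a list) \<Rightarrow> 'k) set) = ker_delta1 V Ar s t Z"
proof (intro equalityI subsetI)
  fix f :: "'a \<times> ('v \<times> 'a list) \<Rightarrow> 'k" assume f: "f \<in> ker_delta1 VB Ar sB tB ZB"
  have "f x = 0" if "x \<notin> pairsA" for x
  proof (cases "x \<in> pairsB")
    case True
    then show ?thesis
      using glued_arrow_pairs_new[of "fst x" "snd x"] that ker_glued_new_pair_eq_0[OF f _ _ _ not_exc]
      by (metis prod.collapse)
  next
    case False
    then show ?thesis using f unfolding ker_delta1_def QB_space_def by blast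
  qed
  then have "f \<in> QB_space V Ar s t Z" unfolding QB_space_def by blast
  with f show "f \<in> ker_delta1 V Ar s t Z"
    using glued_delta1_eq[OF \<open>f \<in> QB_space V Ar s t Z\<close>] unfolding ker_delta1_def by simp
next
  fix f :: "'a \<times> ('v \<times> 'a list) \<Rightarrow> 'k" assume f: "f \<in> ker_delta1 V Ar s t Z"
  then have "f \<in> QB_space VB Ar sB tB ZB"
    using arrow_pairs_subset_glued unfolding ker_delta1_def QB_space_def by blast
  moreover have "delta1 VB Ar sB tB ZB f = delta1 V Ar s t Z f"
    using f unfolding ker_delta1_def by (blast intro: glued_delta1_eq)
  ultimately show "f \<in> ker_delta1 VB Ar sB tB ZB" using f unfolding ker_delta1_def by simp
qed

end

theorem corollary3p18:
  fixes V :: "'v set" and Ar :: "'a set" and s t :: "'a \<Rightarrow> 'v"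
    and Z :: "('v \<times> 'a list) set" and e1 en :: 'v
  assumes mono: "monomial_pres V Ar s t Z"
    and e1V: "e1 \<in> V" and enV: "en \<in> V" and dist: "e1 \<noteq> en"
    and source: "\<forall>a\<in>Ar. t a \<noteq> e1"
    and sink: "\<forall>a\<in>Ar. s a \<noteq> en"
    and e1_not_isolated: "\<exists>a\<in>Ar. s a = e1"
    and en_not_isolated: "\<exists>a\<in>Ar. t a = en"
    and not_exc: "\<not> (CHAR('k::field) = 2 \<and>
        dual_numbers_block Ar (glue e1 en \<circ> s) (glue e1 en \<circ> t) (glued_Z Ar s t Z e1 en) e1)"
  shows "lie_isomorphic
     (ker_delta1 V Ar s t Z :: ('a \<times> ('v \<times> 'a list) \<Rightarrow> 'k) set) (lie_br V Ar s t Z)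
     (ker_delta1 (glued_V V e1 en) Ar (glue e1 en \<circ> s) (glue e1 en \<circ> t) (glued_Z Ar s t Z e1 en))
     (lie_br (glued_V V e1 en) Ar (glue e1 en \<circ> s) (glue e1 en \<circ> t) (glued_Z Ar s t Z e1 en))"
proof -
  interpret source_sink_gluing V Ar s t Z e1 en
    using mono e1V dist source sink by unfold_locales
  show ?thesis
    using ker_delta1_glued_eq[OF not_exc, symmetric] glued_lie_br_eq[symmetric]
    unfolding ker_delta1_def by (intro lie_isomorphic_eqI) blast+
qed

end
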